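(* Let $A$ be a Frobenius algebra of dimension $n$ over a field $\mathbb{k}$ with bilinear form $B$ and Nakayama automorphism $\nu$. Let $\{e_1,\dots,e_n\}$ be a basis of $A$ and $\{e_1^\#,\dots,e_n^\#\}$ the dual basis with $B(e_i^\#,e_j)=\delta_{ij}$, and let $\Delta\in\mathcal{E}_A$ be the Frobenius coproduct $\Delta(x)=\sum_{i=1}^n xe_i\otimes e_i^\#$. Let $M=A\star\Delta=\{a\star\Delta: a\in A\}\subseteq\mathcal{E}_A$ be the left $A$-submodule generated by $\Delta$. Then $\dim_{\mathbb{k}}M=n$.
   Context: A Frobenius algebra over a field $\mathbb{k}$ is a finite-dimensional associative unital $\mathbb{k}$-algebra $A$ with a nondegenerate bilinear form $B:A\times A\to\mathbb{k}$ with $B(ab,c)=B(a,bc)$. Its Nakayama automorphism is the algebra automorphism $\nu:A\to A$ with $B(x,y)=B(y,\nu(x))$ for all $x,y\in A$. The Frobenius space $\mathcal{E}_A$ is the $\mathbb{k}$-vector space of all $\mathbb{k}$-linear maps $\Delta:A\to A\otimes_{\mathbb{k}} A$ that are $A$-bimodule homomorphisms, where $A\otimes A$ has bimodule structure $a(x\otimes y)b=ax\otimes yb$; such a $\Delta$ is determined by $\Delta(1_A)$ via $\Delta(x)=(x\otimes 1)\Delta(1_A)$. The left $A$-module structure $\star$ on $\mathcal{E}_A$ is defined by $(a\star\Delta)(1_A)=(1\otimes\nu^{-1}(a))\Delta(1_A)$, i.e. if $\Delta(1_A)=\sum_j x_j\otimes y_j$ then $a\star\Delta$ is the element of $\mathcal{E}_A$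 with $(a\star\Delta)(1_A)=\sum_j x_j\otimes\nu^{-1}(a)y_j$. *)

theory Defs
  imports Complex_Main "HOL-Library.Function_Algebras"
begin

text \<open>
  The Frobenius algebra A is the whole of a type 'a carrying an
  associative unital ring structure (classes ring + monoid_mult; 0 = 1 is allowed)
  together with a scalar multiplication sc over a field 'k making it a k-algebra.

  Tensors: A (x) A is modelled (faithfully, as A is finite dimensional) by its
  canonical image in the space of bilinear forms on A^* x A^*:  the pure tensor
  x (x) y is the map (f,g) |-> f x * g y on pairs of k-linear functionals
  (and 0 on pairs that are not both linear functionals).
\<close>

type_synonym ('k, 'a) tensor = "('a \<Rightarrow> 'k) \<Rightarrow> ('a \<Rightarrow> 'k) \<Rightarrow> 'k"

definition lin_fun :: "('k::field \<Rightarrow> 'a::ab_group_add \<Rightarrow> 'a) \<Rightarrow> ('a \<Rightarrow> 'k) \<Rightarrow> bool" where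
  "lin_fun sc f \<longleftrightarrow> Vector_Spaces.linear sc ((*) :: 'k \<Rightarrow> 'k \<Rightarrow> 'k) f"

definition tens :: "('k::field \<Rightarrow> 'a::ab_group_add \<Rightarrow> 'a) \<Rightarrow> 'a \<Rightarrow> 'a \<Rightarrow> ('k, 'a) tensor" where
  "tens sc x y = (\<lambda>f g. if lin_fun sc f \<and> lin_fun sc g then f x * g y else 0)"

text \<open>(a (x) 1) t : left multiplication in the first tensor factor\<close>
definition lmult1 :: "('k::field \<Rightarrow> 'a::{ring,monoid_mult} \<Rightarrow> 'a) \<Rightarrow> 'a \<Rightarrow> ('k, 'a) tensor \<Rightarrow> ('k, 'a) tensor" where
  "lmult1 sc a t = (\<lambda>f g. if lin_fun sc f \<and> lin_fun sc g then t (\<lambda>z. f (a * z)) g else 0)"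

text \<open>(1 (x) c) t : left multiplication in the second tensor factor\<close>
definition lmult2 :: "('k::field \<Rightarrow> 'a::{ring,monoid_mult} \<Rightarrow> 'a) \<Rightarrow> 'a \<Rightarrow> ('k, 'a) tensor \<Rightarrow> ('k, 'a) tensor" where
  "lmult2 sc c t = (\<lambda>f g. if lin_fun sc f \<and> lin_fun sc g then t f (\<lambda>z. g (c * z)) else 0)"

text \<open>t (1 (x) b) : right multiplication in the second tensor factor\<close>
definition rmult2 :: "('k::field \<Rightarrow> 'a::{ring,monoid_mult} \<Rightarrow> 'a) \<Rightarrow> 'a \<Rightarrow> ('k, 'a) tensor \<Rightarrow> ('k, 'a) tensor" where
  "rmult2 sc b t = (\<lambda>f g. if lin_fun sc f \<and> lin_fun sc g then t f (\<lambda>z. g (z * b)) else 0)"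

definition tensor_space :: "('k::field \<Rightarrow> 'a::ab_group_add \<Rightarrow> 'a) \<Rightarrow> ('k, 'a) tensor set" where
  "tensor_space sc = module.span (\<lambda>c t f g. c * t f g) (range (\<lambda>(x, y). tens sc x y))"

definition fscale :: "'k::field \<Rightarrow> ('a \<Rightarrow> ('k, 'a) tensor) \<Rightarrow> ('a \<Rightarrow> ('k, 'a) tensor)" where
  "fscale c D = (\<lambda>x f g. c * D x f g)"

definition frobenius_space :: "('k::field \<Rightarrow> 'a::{ring,monoid_mult} \<Rightarrow> 'a) \<Rightarrow> ('a \<Rightarrow> ('k, 'a) tensor) set" where
  "frobenius_space sc = {D. range D \<subseteq> tensor_space sc
      \<and> Vector_Spaces.linear sc (\<lambda>c t f g. c * t f g) D
      \<and> (\<forall>a x b. D (a * x * b) = lmult1 sc a (rmult2 sc b (D x)))}"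

text \<open>The left A-module structure: (a \<star> D)(1) = (1 (x) nu^-1(a)) D(1),
  and (a \<star> D)(x) = (x (x) 1)(a \<star> D)(1).\<close>
definition star :: "('k::field \<Rightarrow> 'a::{ring,monoid_mult} \<Rightarrow> 'a) \<Rightarrow> ('a \<Rightarrow> 'a) \<Rightarrow> 'a
    \<Rightarrow> ('a \<Rightarrow> ('k, 'a) tensor) \<Rightarrow> ('a \<Rightarrow> ('k, 'a) tensor)" where
  "star sc \<nu> a D = (\<lambda>x. lmult1 sc x (lmult2 sc (inv \<nu> a) (D 1)))"

definition frob_coproduct :: "('k::field \<Rightarrow> 'a::{ring,monoid_mult} \<Rightarrow> 'a) \<Rightarrow> nat \<Rightarrow> (nat \<Rightarrow> 'a)
    \<Rightarrow> (nat \<Rightarrow> 'a) \<Rightarrow> ('a \<Rightarrow> ('k, 'a) tensor)" where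
  "frob_coproduct sc n e e' = (\<lambda>x. \<Sum>i<n. tens sc (x * e i) (e' i))"

end

theory Submission
  imports Defs
begin

text \<open>
  Since \<open>\<nu>\<close> is bijective, \<open>M\<close> is the image of \<open>A\<close> under the map
  \<open>c \<mapsto> \<Delta>\<^sub>c\<close>, where \<open>\<Delta>\<^sub>c(x) = \<Sum>\<^sub>i x e\<^sub>i \<otimes> c e\<^sub>i\<^sup>#\<close>.
  This map is \<open>\<bbbk>\<close>-linear, and it is injective: applying \<open>B(1,-) \<otimes> B(w,-)\<close>
  to \<open>\<Delta>\<^sub>c(1)\<close> gives \<open>\<Sum>\<^sub>i B(1,e\<^sub>i) B(e\<^sub>i\<^sup>#, \<nu>(wc)) = B(1, \<nu>(wc)) = B(w,c)\<close>
  by the dual basis expansion and the Nakayama relation, so \<open>\<Delta>\<^sub>c = 0\<close> forces \<open>c = 0\<close>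
  by nondegeneracy.
\<close>

lemma vector_space_field_mult: "vector_space ((*) :: 'k::field \<Rightarrow> 'k \<Rightarrow> 'k)"
  by unfold_locales (auto simp: algebra_simps)

lemma vector_space_fscale: "vector_space (fscale :: 'k::field \<Rightarrow> ('a \<Rightarrow> ('k, 'a) tensor) \<Rightarrow> _)"
  by unfold_locales (auto simp: fscale_def algebra_simps fun_eq_iff)

lemma sum_apply: "sum h A x = (\<Sum>i\<in>A. h i x)"
  by (induction A rule: infinite_finite_induct) auto

lemma lin_fun_add: "lin_fun sc f \<Longrightarrow> f (x + y) = f x + f y"
  unfolding lin_fun_def Vector_Spaces.linear_iff by auto

lemma lin_fun_scale: "lin_fun sc f \<Longrightarrow> f (sc c x) = c * f x"
  unfolding lin_fun_def Vector_Spaces.linear_iff by auto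

lemma lin_fun_sum: "lin_fun sc f \<Longrightarrow> f (sum h A) = (\<Sum>i\<in>A. f (h i))"
  unfolding lin_fun_def by (rule module_hom.sum[OF module_hom_iff_linear[THEN iffD2]])

lemma lin_fun_mult_left:
  fixes sc :: "'k::field \<Rightarrow> 'a::{ring,monoid_mult} \<Rightarrow> 'a"
  assumes "vector_space sc" and "\<And>c x y. sc c (x * y) = x * sc c y" and "lin_fun sc f"
  shows "lin_fun sc (\<lambda>z. f (a * z))"
  using assms(1,3) vector_space_field_mult
  by (auto simp: lin_fun_def Vector_Spaces.linear_iff distrib_left assms(2)[symmetric])

lemma tens_apply: "lin_fun sc f \<Longrightarrow> lin_fun sc g \<Longrightarrow> tens sc x y f g = f x * g y"
  by (simp add: tens_def)

lemma tens_add_right: "tens sc x (y + z) = tens sc x y + tens sc x z"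
  by (auto simp: tens_def fun_eq_iff lin_fun_add distrib_left)

lemma tens_scale_right: "tens sc x (sc c y) = (\<lambda>f g. c * tens sc x y f g)"
  by (auto simp: tens_def fun_eq_iff lin_fun_scale mult.left_commute)

lemma star_frob_coproduct:
  fixes sc :: "'k::field \<Rightarrow> 'a::{ring,monoid_mult} \<Rightarrow> 'a"
  assumes "vector_space sc" and "\<And>c x y. sc c (x * y) = x * sc c y"
  shows "star sc \<nu> a (frob_coproduct sc n e e') = frob_coproduct sc n e (\<lambda>i. inv \<nu> a * e' i)"
  using lin_fun_mult_left[OF assms]
  by (auto simp: fun_eq_iff star_def lmult1_def lmult2_def frob_coproduct_def tens_def
      sum_apply mult.assoc)

lemma linear_frob_coproduct_mult_left:
  fixes sc :: "'k::field \<Rightarrow> 'a::{ring,monoid_mult} \<Rightarrow> 'a"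
  assumes "vector_space sc" and "\<And>c x y. sc c (x * y) = sc c x * y"
  shows "Vector_Spaces.linear sc fscale (\<lambda>c. frob_coproduct sc n e (\<lambda>i. c * e' i))"
  unfolding module_hom_iff_linear[symmetric] module_hom_iff
proof (intro conjI allI)
  show "module sc"
    using assms(1) by (simp add: module_iff_vector_space)
  show "module (fscale :: 'k \<Rightarrow> ('a \<Rightarrow> ('k, 'a) tensor) \<Rightarrow> _)"
    using vector_space_fscale by (simp add: module_iff_vector_space)
  show "frob_coproduct sc n e (\<lambda>i. (x + y) * e' i) =
      frob_coproduct sc n e (\<lambda>i. x * e' i) + frob_coproduct sc n e (\<lambda>i. y * e' i)" for x y
    by (simp add: frob_coproduct_def distrib_right tens_add_right sum.distrib fun_eq_iff)
  show "frob_coproduct sc n e (\<lambda>i. sc c x * e' i) = fscale c (frob_coproduct sc n e (\<lambda>i. x * e' i))"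
    for c x
    by (simp add: frob_coproduct_def fscale_def assms(2)[symmetric] tens_scale_right
        sum_apply sum_distrib_left fun_eq_iff)
qed

lemma dual_basis_expansion:
  fixes sc :: "'k::field \<Rightarrow> 'a::ab_group_add \<Rightarrow> 'a" and e e' :: "nat \<Rightarrow> 'a"
  assumes "vector_space sc"
    and span: "module.span sc (e ` {..<n}) = UNIV" and inj: "inj_on e {..<n}"
    and B_lin2: "\<And>x. lin_fun sc (B x)"
    and dual: "\<And>i j. i < n \<Longrightarrow> j < n \<Longrightarrow> B (e' i) (e j) = (if i = j then 1 else 0)"
  shows "v = (\<Sum>j<n. sc (B (e' j) v) (e j))"
proof -
  interpret A: vector_space sc by fact
  have "v \<in> A.span (e ` {..<n})"
    using span by simp
  then obtain u where "v = (\<Sum>x\<in>e ` {..<n}. sc (u x) x)"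
    by (auto simp: A.span_finite)
  then have u: "v = (\<Sum>j<n. sc (u (e j)) (e j))"
    by (simp add: sum.reindex[OF inj])
  have "B (e' i) v = u (e i)" if "i < n" for i
  proof -
    have "B (e' i) v = (\<Sum>j<n. u (e j) * B (e' i) (e j))"
      by (subst u) (simp add: lin_fun_sum[OF B_lin2] lin_fun_scale[OF B_lin2])
    also have "\<dots> = (\<Sum>j<n. if j = i then u (e j) else 0)"
      using dual that by (intro sum.cong) auto
    also have "\<dots> = u (e i)"
      using that by simp
    finally show ?thesis .
  qed
  then show ?thesis
    using u by simp
qed

lemma frob_coproduct_mult_left_pairing:
  fixes sc :: "'k::field \<Rightarrow> 'a::{ring,monoid_mult} \<Rightarrow> 'a"
  assumes "vector_space sc"
    and "module.span sc (e ` {..<n}) = UNIV" and "inj_on e {..<n}"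
    and B_lin2: "\<And>x. lin_fun sc (B x)"
    and "\<And>i j. i < n \<Longrightarrow> j < n \<Longrightarrow> B (e' i) (e j) = (if i = j then 1 else 0)"
    and B_assoc: "\<And>a b c. B (a * b) c = B a (b * c)"
    and nakayama: "\<And>x y. B x y = B y (\<nu> x)"
  shows "frob_coproduct sc n e (\<lambda>i. c * e' i) 1 (B 1) (B w) = B w c"
proof -
  have "frob_coproduct sc n e (\<lambda>i. c * e' i) 1 (B 1) (B w) = (\<Sum>i<n. B 1 (e i) * B w (c * e' i))"
    using B_lin2 by (simp add: frob_coproduct_def sum_apply tens_apply)
  also have "\<dots> = (\<Sum>i<n. B (e' i) (\<nu> (w * c)) * B 1 (e i))"
    by (simp add: B_assoc[symmetric] nakayama[of "w * c"] mult.commute)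
  also have "\<dots> = B 1 (\<Sum>j<n. sc (B (e' j) (\<nu> (w * c))) (e j))"
    by (simp add: lin_fun_sum[OF B_lin2] lin_fun_scale[OF B_lin2])
  also have "\<dots> = B 1 (\<nu> (w * c))"
    by (simp only: dual_basis_expansion[where B = B and e' = e', OF assms(1-5), symmetric])
  also have "\<dots> = B w c"
    by (simp add: nakayama[symmetric] B_assoc)
  finally show ?thesis .
qed

theorem proposition7:
  fixes sc :: "'k::field \<Rightarrow> 'a::{ring,monoid_mult} \<Rightarrow> 'a"
    and B :: "'a \<Rightarrow> 'a \<Rightarrow> 'k"
    and \<nu> :: "'a \<Rightarrow> 'a"
    and n :: nat
    and e e' :: "nat \<Rightarrow> 'a"
  assumes vs: "vector_space sc"
    and alg: "\<And>c x y. sc c (x * y) = sc c x * y" "\<And>c x y. sc c (x * y) = x * sc c y"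
    and basis_indep: "module.independent sc (e ` {..<n})"
    and basis_span: "module.span sc (e ` {..<n}) = UNIV"
    and basis_inj: "inj_on e {..<n}"
    and B_lin1: "\<And>y. Vector_Spaces.linear sc ((*) :: 'k \<Rightarrow> 'k \<Rightarrow> 'k) (\<lambda>x. B x y)"
    and B_lin2: "\<And>x. Vector_Spaces.linear sc ((*) :: 'k \<Rightarrow> 'k \<Rightarrow> 'k) (\<lambda>y. B x y)"
    and B_nondeg1: "\<And>x. (\<forall>y. B x y = 0) \<Longrightarrow> x = 0"
    and B_nondeg2: "\<And>y. (\<forall>x. B x y = 0) \<Longrightarrow> y = 0"
    and B_assoc: "\<And>a b c. B (a * b) c = B a (b * c)"
    and nu_lin: "Vector_Spaces.linear sc sc \<nu>"
    and nu_mult: "\<And>x y. \<nu> (x * y) = \<nu> x * \<nu> y"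
    and nu_one: "\<nu> 1 = 1"
    and nu_bij: "bij \<nu>"
    and nakayama: "\<And>x y. B x y = B y (\<nu> x)"
    and dual: "\<And>i j. i < n \<Longrightarrow> j < n \<Longrightarrow> B (e' i) (e j) = (if i = j then 1 else 0)"
  shows "vector_space.dim fscale
           ((\<lambda>a. star sc \<nu> a (frob_coproduct sc n e e')) ` UNIV) = n"
proof -
  define L where "L c = frob_coproduct sc n e (\<lambda>i. c * e' i)" for c
  interpret L: Vector_Spaces.linear sc fscale L
    unfolding L_def by (rule linear_frob_coproduct_mult_left[OF vs alg(1)])
  interpret A: finite_dimensional_vector_space_pair_1 sc "e ` {..<n}" fscale
    by (simp add: finite_dimensional_vector_space_pair_1_def finite_dimensional_vector_space_def
        finite_dimensional_vector_space_axioms_def vs vector_space_fscale basis_indep basis_span)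
  have "(\<lambda>a. star sc \<nu> a (frob_coproduct sc n e e')) ` UNIV = L ` range (inv \<nu>)"
    by (auto simp: star_frob_coproduct[OF vs alg(2)] L_def)
  also have "\<dots> = range L"
    using bij_is_surj[OF bij_imp_bij_inv[OF nu_bij]] by simp
  finally have M: "(\<lambda>a. star sc \<nu> a (frob_coproduct sc n e e')) ` UNIV = range L" .
  have pairing: "L c 1 (B 1) (B w) = B w c" for c w
    unfolding L_def using B_lin2
    by (intro frob_coproduct_mult_left_pairing[OF vs basis_span basis_inj _ dual B_assoc nakayama])
      (simp add: lin_fun_def)
  have "inj L"
    unfolding L.inj_iff_eq_0
  proof (intro allI impI)
    fix c
    assume "L c = 0"
    then have "B w c = 0" for w
      using pairing[of c w] by simp
    then show "c = 0"
      using B_nondeg2 by blast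
  qed
  then have "L.vs2.dim (range L) = card (e ` {..<n})"
    using A.dim_image_eq[OF L.linear_axioms, of UNIV] by simp
  then show ?thesis
    using M card_image[OF basis_inj] by simp
qed

end
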